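(* Let $P$ be the uniform distribution on $[0,1]$ and $\beta=\{\frac14,\frac12\}$. The conditional optimal set of six-points for $P$ with respect to $\beta$ is $\alpha_6=\{\frac1{12},\frac14,\frac38,\frac12,\frac7{10},\frac9{10}\}$, with $V_6=\frac{1777}{691200}$ ($\approx0.00257089$).
   Context: For a Borel probability measure $P$ on $\mathbb{R}$ and finite $\beta$ with $\mathrm{card}(\beta)=r$, for $n\ge r$, $V_n=\inf\{\int\min_{a\in\alpha\cup\beta}(x-a)^2dP(x):\mathrm{card}(\alpha)\le n-r\}$; a set $\alpha\cup\beta$ attaining the infimum, with each point of $\beta$ having a Voronoi region of positive $P$-measure, is a conditional optimal set of $n$-points with respect to $\beta$. *)

theory Defs
  imports "HOL-Probability.Probability"
begin

definition distortion :: "real measure \<Rightarrow> real set \<Rightarrow> real" where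
  "distortion P S = (\<integral>x. Min ((\<lambda>a. (x - a)^2) ` S) \<partial>P)"

definition cond_V :: "real measure \<Rightarrow> real set \<Rightarrow> nat \<Rightarrow> real" where
  "cond_V P \<beta> n = Inf {distortion P (\<alpha> \<union> \<beta>) | \<alpha>. finite \<alpha> \<and> card \<alpha> \<le> n - card \<beta>}"

definition voronoi :: "real set \<Rightarrow> real \<Rightarrow> real set" where
  "voronoi S a = {x. \<forall>b\<in>S. \<bar>x - a\<bar> \<le> \<bar>x - b\<bar>}"

definition cond_optimal :: "real measure \<Rightarrow> real set \<Rightarrow> nat \<Rightarrow> real set \<Rightarrow> bool" where
  "cond_optimal P \<beta> n S \<longleftrightarrow>
     (\<exists>\<alpha>. finite \<alpha> \<and> card \<alpha> \<le> n - card \<beta> \<and> S = \<alpha> \<union> \<beta>) \<and>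
     distortion P S = cond_V P \<beta> n \<and>
     (\<forall>b\<in>\<beta>. measure P (voronoi S b) > 0)"

end

theory Submission
  imports Defs
begin

(* Cut [0,1] at the two prescribed points 1/4 and 1/2.  On a piece [u,v] every point of the
   configuration owns the two halves of its Voronoi cell, except that a prescribed endpoint of
   the piece owns only the half lying inside; with n such half-cells the distortion on [u,v] is
   at least (v - u)^3 / (3 n^2), with equality only for n half-cells of equal length.  This is
   proved by induction, removing the largest point and merging the two bounds with Radon's
   inequality a^3/p^2 + b^3/q^2 >= (a + b)^3/(p + q)^2.  At most six points give at most eight
   points on the three pieces (1/4 and 1/2 are counted twice), and a finite check shows that
   the sum of the three bounds is smallest, namely 1777/691200, only for 2, 3 and 3 points,
   whose equally spaced configurations together form alpha6. *)

definition sqdist_to :: "real set \<Rightarrow> real \<Rightarrow> real" where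
  "sqdist_to S x = Min ((\<lambda>a. (x - a)^2) ` S)"

definition distortion_on :: "real set \<Rightarrow> real \<Rightarrow> real \<Rightarrow> real" where
  "distortion_on S u v = integral {u..v} (sqdist_to S)"

lemma sqdist_to_singleton [simp]: "sqdist_to {t} x = (x - t)^2"
  by (simp add: sqdist_to_def)

lemma continuous_sqdist_to:
  assumes "finite S" "S \<noteq> {}"
  shows "continuous_on UNIV (sqdist_to S)"
  using assms
proof (induction S rule: finite_ne_induct)
  case (singleton t)
  then show ?case by (simp add: continuous_intros)
next
  case (insert t S)
  have "sqdist_to (insert t S) = (\<lambda>x. min ((x - t)^2) (sqdist_to S x))"
    using insert by (simp add: sqdist_to_def fun_eq_iff)
  then show ?case using insert by (auto intro!: continuous_intros)
qed

lemma sqdist_to_integrable: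
  assumes "finite S" "S \<noteq> {}"
  shows "sqdist_to S integrable_on {u..v}"
  using continuous_sqdist_to[OF assms] continuous_on_subset integrable_continuous_real by blast

lemma distortion_on_combine:
  assumes "finite S" "S \<noteq> {}" "u \<le> w" "w \<le> v"
  shows "distortion_on S u v = distortion_on S u w + distortion_on S w v"
  unfolding distortion_on_def
  using Henstock_Kurzweil_Integration.integral_combine[OF assms(3,4) sqdist_to_integrable[OF assms(1,2)]]
  by simp

lemma sqdist_to_eq_subset:
  assumes "finite S" "B \<subseteq> S" "B \<noteq> {}"
    and "\<And>a. a \<in> S \<Longrightarrow> \<exists>b\<in>B. \<bar>x - b\<bar> \<le> \<bar>x - a\<bar>"
  shows "sqdist_to S x = sqdist_to B x"
proof (rule antisym)
  have "finite B" using assms(1,2) finite_subset by blast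
  then show "sqdist_to S x \<le> sqdist_to B x"
    unfolding sqdist_to_def using assms(1-3) by (intro Min_antimono) auto
  show "sqdist_to B x \<le> sqdist_to S x"
    unfolding sqdist_to_def
  proof (rule Min.boundedI)
    show "finite ((\<lambda>a. (x - a)^2) ` S)" using assms(1) by simp
    show "(\<lambda>a. (x - a)^2) ` S \<noteq> {}" using assms(2,3) by auto
    fix y assume "y \<in> (\<lambda>a. (x - a)^2) ` S"
    then obtain a b where "a \<in> S" "y = (x - a)^2" "b \<in> B" "\<bar>x - b\<bar> \<le> \<bar>x - a\<bar>"
      using assms(4) by blast
    with \<open>finite B\<close> show "Min ((\<lambda>a. (x - a)^2) ` B) \<le> y"
      by (meson Min_le_iff abs_le_square_iff finite_imageI image_eqI image_is_empty assms(3))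
  qed
qed

lemma distortion_on_singleton:
  assumes "u \<le> v"
  shows "distortion_on {t} u v = (v - u)^3 / 12 + (v - u) * (t - (u + v) / 2)^2"
proof -
  have "((\<lambda>x. (x - t)^2) has_integral (v - t)^3 / 3 - (u - t)^3 / 3) {u..v}"
    using assms by (intro fundamental_theorem_of_calculus)
      (auto intro!: derivative_eq_intros
        simp: power2_eq_square has_real_derivative_iff_has_vector_derivative[symmetric])
  then have "distortion_on {t} u v = (v - t)^3 / 3 - (u - t)^3 / 3"
    unfolding distortion_on_def by (simp add: integral_unique flip: sqdist_to_singleton)
  then show ?thesis by (simp add: power2_eq_square power3_eq_cube field_simps)
qed

lemma distortion_uniform_measure:
  assumes "finite S" "S \<noteq> {}" "a < b"
  shows "distortion (uniform_measure lborel {a..b}) S = distortion_on S a b / (b - a)"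
proof -
  have cont: "continuous_on UNIV (sqdist_to S)"
    using continuous_sqdist_to[OF assms(1,2)] .
  have "uniform_measure lborel {a..b} = density lborel (\<lambda>x. ennreal (indicator {a..b} x / (b - a)))"
    using assms(3) unfolding uniform_measure_def
    by (intro density_cong) (auto simp: indicator_def divide_ennreal[symmetric])
  then have "distortion (uniform_measure lborel {a..b}) S
      = (\<integral>x. indicator {a..b} x / (b - a) * sqdist_to S x \<partial>lborel)"
    unfolding distortion_def sqdist_to_def[symmetric] using assms(3) cont
    by (simp add: integral_density borel_measurable_continuous_onI)
  also have "\<dots> = (LINT x:{a..b}|lborel. sqdist_to S x) / (b - a)"
    by (simp add: set_lebesgue_integral_def)
  also have "(LINT x:{a..b}|lborel. sqdist_to S x) = distortion_on S a b"
    unfolding distortion_on_def using cont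
    by (intro set_borel_integral_eq_integral(2) borel_integrable_atLeastAtMost')
      (auto intro: continuous_on_subset)
  finally show ?thesis .
qed

lemma distortion_on_split_at:
  assumes "finite S" "b \<in> S" "u \<le> b" "b \<le> v"
  shows "distortion_on S u v = distortion_on {a\<in>S. a \<le> b} u b + distortion_on {a\<in>S. b \<le> a} b v"
proof -
  have "distortion_on S u v = distortion_on S u b + distortion_on S b v"
    using assms by (intro distortion_on_combine) auto
  also have "distortion_on S u b = distortion_on {a\<in>S. a \<le> b} u b"
    unfolding distortion_on_def
  proof (intro integral_cong sqdist_to_eq_subset)
    fix x a assume "x \<in> {u..b}" "a \<in> S"
    then show "\<exists>c\<in>{a\<in>S. a \<le> b}. \<bar>x - c\<bar> \<le> \<bar>x - a\<bar>"
      using assms(2) by (cases "a \<le> b") auto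
  qed (use assms(1,2) in auto)
  also have "distortion_on S b v = distortion_on {a\<in>S. b \<le> a} b v"
    unfolding distortion_on_def
  proof (intro integral_cong sqdist_to_eq_subset)
    fix x a assume "x \<in> {b..v}" "a \<in> S"
    then show "\<exists>c\<in>{a\<in>S. b \<le> a}. \<bar>x - c\<bar> \<le> \<bar>x - a\<bar>"
      using assms(2) by (cases "b \<le> a") auto
  qed (use assms(1,2) in auto)
  finally show ?thesis .
qed

lemma distortion_on_insert_max:
  assumes "finite A" "A \<noteq> {}" "\<forall>a\<in>A. a < t" "u \<le> v"
  obtains c where "u \<le> c" "c \<le> v"
    "distortion_on (insert t A) u v = distortion_on A u c + distortion_on {t} c v"
proof -
  define s where "s = Max A"
  define c where "c = max u (min v ((s + t) / 2))"
  have "s \<in> A" "\<forall>a\<in>A. a \<le> s" using assms(1,2) by (simp_all add: s_def)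
  then have "s < t" using assms(3) by blast
  have left: "sqdist_to A x = sqdist_to (insert t A) x" if "x \<le> (s + t) / 2" for x
  proof (rule sqdist_to_eq_subset[symmetric])
    fix a assume "a \<in> insert t A"
    then show "\<exists>b\<in>A. \<bar>x - b\<bar> \<le> \<bar>x - a\<bar>"
    proof
      assume "a = t"
      then show ?thesis using \<open>s \<in> A\<close> \<open>s < t\<close> that by (intro bexI[of _ s]) auto
    qed auto
  qed (use assms(1,2) in auto)
  have right: "sqdist_to {t} x = sqdist_to (insert t A) x" if "(s + t) / 2 \<le> x" for x
  proof (rule sqdist_to_eq_subset[symmetric])
    fix a assume "a \<in> insert t A"
    then show "\<exists>b\<in>{t}. \<bar>x - b\<bar> \<le> \<bar>x - a\<bar>"
      using \<open>\<forall>a\<in>A. a \<le> s\<close> \<open>s < t\<close> that by fastforce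
  qed (use assms(1) in auto)
  have "u \<le> c" "c \<le> v" using assms(4) by (auto simp: c_def)
  then have "distortion_on (insert t A) u v
      = distortion_on (insert t A) u c + distortion_on (insert t A) c v"
    using assms(1) by (intro distortion_on_combine) auto
  also have "distortion_on (insert t A) u c = distortion_on A u c"
    unfolding distortion_on_def
    by (rule integral_spike[of "{u}"])
      (auto intro!: left simp: c_def max_def min_def split: if_splits)
  also have "distortion_on (insert t A) c v = distortion_on {t} c v"
    unfolding distortion_on_def
    by (rule integral_spike[of "{v}"])
      (auto intro!: right[unfolded sqdist_to_singleton] simp: c_def max_def min_def split: if_splits)
  finally show thesis using that \<open>u \<le> c\<close> \<open>c \<le> v\<close> by blast
qed

lemma distortion_on_voronoi_cell:
  assumes "finite T" "a \<in> T" "{u..v} \<subseteq> voronoi T a"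
  shows "distortion_on T u v = distortion_on {a} u v"
  unfolding distortion_on_def
  by (intro integral_cong sqdist_to_eq_subset) (use assms in \<open>auto simp: voronoi_def\<close>)

lemma radon_cube:
  fixes a b p q :: real
  assumes "0 < p" "0 < q" "0 \<le> a" "0 \<le> b"
  shows "(a + b)^3 / (p + q)^2 \<le> a^3 / p^2 + b^3 / q^2"
    and "a^3 / p^2 + b^3 / q^2 \<le> (a + b)^3 / (p + q)^2 \<Longrightarrow> a / p = b / q"
proof -
  define x y where "x = a / p" and "y = b / q"
  define r where "r = p * q * (x - y)^2 * (p * (2 * x + y) + q * (x + 2 * y))"
  have "a = p * x" "b = q * y" using assms(1,2) by (simp_all add: x_def y_def)
  then have lhs: "a^3 / p^2 + b^3 / q^2 = p * x^3 + q * y^3"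
    using assms(1,2) by (simp add: power2_eq_square power3_eq_cube)
  have "(p + q)^2 * (p * x^3 + q * y^3) = (p * x + q * y)^3 + r"
    unfolding r_def by (simp add: power2_eq_square power3_eq_cube algebra_simps)
  with \<open>a = p * x\<close> \<open>b = q * y\<close> assms(1,2)
  have gap: "a^3 / p^2 + b^3 / q^2 = (a + b)^3 / (p + q)^2 + r / (p + q)^2"
    unfolding lhs by (simp add: field_simps)
  have "0 \<le> x" "0 \<le> y" using assms by (simp_all add: x_def y_def)
  then have "0 \<le> r" using assms(1,2) unfolding r_def by simp
  then show "(a + b)^3 / (p + q)^2 \<le> a^3 / p^2 + b^3 / q^2"
    using gap by simp
  assume "a^3 / p^2 + b^3 / q^2 \<le> (a + b)^3 / (p + q)^2"
  then have "r \<le> 0" using gap assms(1,2) by (simp add: divide_le_0_iff)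
  show "a / p = b / q"
  proof (rule ccontr)
    assume "a / p \<noteq> b / q"
    then have "x \<noteq> y" "0 < x + y" using \<open>0 \<le> x\<close> \<open>0 \<le> y\<close> by (auto simp: x_def y_def)
    have "p * (2 * x + y) + q * (x + 2 * y) = (p + q) * (x + y) + p * x + q * y"
      by (simp add: algebra_simps)
    also have "\<dots> > 0"
      using \<open>0 < x + y\<close> \<open>0 \<le> x\<close> \<open>0 \<le> y\<close> assms(1,2) by (intro add_pos_nonneg) auto
    finally have "0 < p * (2 * x + y) + q * (x + 2 * y)" .
    then have "0 < r" using \<open>x \<noteq> y\<close> assms(1,2) unfolding r_def by simp
    with \<open>r \<le> 0\<close> show False by simp
  qed
qed

definition half_cells :: "nat \<Rightarrow> bool \<Rightarrow> bool \<Rightarrow> real" where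
  "half_cells m pl pr = 2 * real m - of_bool pl - of_bool pr"

(* The points at the odd multiples of h to the right of u (the even ones, starting with u itself,
   if pl): they cut an interval starting at u into half-cells of length h. *)
definition half_cell_grid :: "nat \<Rightarrow> bool \<Rightarrow> real \<Rightarrow> real \<Rightarrow> real set" where
  "half_cell_grid m pl u h = (\<lambda>i. u + (2 * real i + 1 - of_bool pl) * h) ` {..<m}"

lemma half_cell_grid_Suc:
  "half_cell_grid (Suc m) pl u h
    = insert (u + (2 * real m + 1 - of_bool pl) * h) (half_cell_grid m pl u h)"
  by (simp add: half_cell_grid_def lessThan_Suc)

(* If pl and pr, then u = t = v and n = 0, where the bound reads 0 / 0 = 0. *)
lemma distortion_on_singleton_ge_half_cells:
  assumes "u \<le> v" "pl \<Longrightarrow> t = u" "pr \<Longrightarrow> t = v"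
  defines "n \<equiv> half_cells 1 pl pr"
  shows "(v - u)^3 / (3 * n^2) \<le> distortion_on {t} u v"
    and "distortion_on {t} u v \<le> (v - u)^3 / (3 * n^2) \<Longrightarrow> u < v \<Longrightarrow>
      {t} = half_cell_grid 1 pl u ((v - u) / n)"
proof -
  have cost: "distortion_on {t} u v = (v - u)^3 / 12 + (v - u) * (t - (u + v) / 2)^2"
    using distortion_on_singleton[OF assms(1)] .
  have "0 \<le> (v - u) * (t - (u + v) / 2)^2" using assms(1) by simp
  then show "(v - u)^3 / (3 * n^2) \<le> distortion_on {t} u v"
    using assms(1-3) unfolding cost n_def half_cells_def
    by (cases pl; cases pr) (auto simp: power2_eq_square power3_eq_cube field_simps)
  assume le: "distortion_on {t} u v \<le> (v - u)^3 / (3 * n^2)" and "u < v"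
  have "t = (u + v) / 2" if "\<not> pl" "\<not> pr"
  proof -
    have "(v - u) * (t - (u + v) / 2)^2 \<le> 0"
      using le that unfolding cost n_def half_cells_def by simp
    then show ?thesis using \<open>u < v\<close> by (simp add: mult_le_0_iff)
  qed
  then show "{t} = half_cell_grid 1 pl u ((v - u) / n)"
    using assms(2,3) \<open>u < v\<close> unfolding n_def half_cells_def half_cell_grid_def
    by (cases pl; cases pr) (auto simp: field_simps)
qed

lemma half_cell_bounds_add:
  fixes p q u c v d d' :: real
  assumes "0 < p" "0 < q" "u \<le> c" "c \<le> v"
    and "(c - u)^3 / (3 * p^2) \<le> d" "(v - c)^3 / (3 * q^2) \<le> d'"
  shows "(v - u)^3 / (3 * (p + q)^2) \<le> d + d'"
    and "d + d' \<le> (v - u)^3 / (3 * (p + q)^2) \<Longrightarrow> d \<le> (c - u)^3 / (3 * p^2) \<and>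
      d' \<le> (v - c)^3 / (3 * q^2) \<and> c - u = p * ((v - u) / (p + q)) \<and> v - c = q * ((v - u) / (p + q))"
proof -
  have radon: "(v - u)^3 / (p + q)^2 \<le> (c - u)^3 / p^2 + (v - c)^3 / q^2"
    using radon_cube(1)[OF assms(1,2), of "c - u" "v - c"] assms(3,4) by simp
  then show "(v - u)^3 / (3 * (p + q)^2) \<le> d + d'"
    using assms(5,6) by simp
  assume le: "d + d' \<le> (v - u)^3 / (3 * (p + q)^2)"
  then have "(c - u)^3 / p^2 + (v - c)^3 / q^2 \<le> (v - u)^3 / (p + q)^2"
    using assms(5,6) by simp
  then have "(c - u) / p = (v - c) / q"
    using radon_cube(2)[OF assms(1,2), of "c - u" "v - c"] assms(3,4) by simp
  then have "c - u = p * ((v - u) / (p + q))" "v - c = q * ((v - u) / (p + q))"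
    using assms(1,2) by (simp_all add: field_simps)
  with le radon assms(5,6) show "d \<le> (c - u)^3 / (3 * p^2) \<and>
      d' \<le> (v - c)^3 / (3 * q^2) \<and> c - u = p * ((v - u) / (p + q)) \<and> v - c = q * ((v - u) / (p + q))"
    by simp
qed

lemma distortion_on_ge_half_cells:
  assumes "finite T" "T \<noteq> {}" "u \<le> v"
    and "pl \<Longrightarrow> u \<in> T \<and> (\<forall>a\<in>T. u \<le> a)" and "pr \<Longrightarrow> v \<in> T \<and> (\<forall>a\<in>T. a \<le> v)"
  shows "(v - u)^3 / (3 * half_cells (card T) pl pr ^ 2) \<le> distortion_on T u v \<and>
    (distortion_on T u v \<le> (v - u)^3 / (3 * half_cells (card T) pl pr ^ 2) \<longrightarrow> u < v \<longrightarrow>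
      T = half_cell_grid (card T) pl u ((v - u) / half_cells (card T) pl pr))"
  using assms
proof (induction T arbitrary: v pr rule: finite_linorder_max_induct)
  case empty
  then show ?case by simp
next
  case (insert t A)
  show ?case
  proof (cases "A = {}")
    case True
    then show ?thesis
      using distortion_on_singleton_ge_half_cells[of u v pl t pr] insert.prems by auto
  next
    case False
    obtain c where c: "u \<le> c" "c \<le> v"
      and split: "distortion_on (insert t A) u v = distortion_on A u c + distortion_on {t} c v"
      using distortion_on_insert_max[OF insert.hyps(1) False insert.hyps(2) insert.prems(2)] by metis
    have pin_A: "u \<in> A \<and> (\<forall>a\<in>A. u \<le> a)" if pl
      using insert.prems(3)[OF that] insert.hyps(2) False by fastforce
    have pin_t: "t = v" if pr
      using insert.prems(4)[OF that] insert.hyps(2) by fastforce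
    define p q where "p = half_cells (card A) pl False" and "q = half_cells 1 False pr"
    have "0 < card A" using False insert.hyps(1) by (simp add: card_gt_0_iff)
    then have "0 < p" "0 < q" by (auto simp: p_def q_def half_cells_def)
    have n: "half_cells (card (insert t A)) pl pr = p + q"
      using insert.hyps(1,2) by (auto simp: p_def q_def half_cells_def)
    note IH = insert.IH[of c False, OF False c(1) pin_A FalseE, folded p_def]
    note last =
      distortion_on_singleton_ge_half_cells[of c v False t pr, OF c(2) FalseE pin_t, folded q_def]
    note bounds = half_cell_bounds_add[OF \<open>0 < p\<close> \<open>0 < q\<close> c conjunct1[OF IH] last(1)]
    show ?thesis
      unfolding n split
    proof (intro conjI impI)
      show "(v - u)^3 / (3 * (p + q)^2) \<le> distortion_on A u c + distortion_on {t} c v"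
        by (rule bounds(1))
      define h where "h = (v - u) / (p + q)"
      assume le: "distortion_on A u c + distortion_on {t} c v \<le> (v - u)^3 / (3 * (p + q)^2)"
        and "u < v"
      have "distortion_on A u c \<le> (c - u)^3 / (3 * p^2)"
        "distortion_on {t} c v \<le> (v - c)^3 / (3 * q^2)" "c - u = p * h" "v - c = q * h"
        using bounds(2) le unfolding h_def by blast+
      moreover have "0 < p * h" "0 < q * h"
        using \<open>u < v\<close> \<open>0 < p\<close> \<open>0 < q\<close> by (simp_all add: h_def)
      ultimately have "A = half_cell_grid (card A) pl u h" "t = c + h"
        using IH last(2) \<open>0 < p\<close> \<open>0 < q\<close> by (simp_all add: half_cell_grid_def lessThan_Suc)
      then show "insert t A = half_cell_grid (card (insert t A)) pl u h"
        using insert.hyps(1,2) \<open>c - u = p * h\<close>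
        by (auto simp: half_cell_grid_Suc p_def half_cells_def algebra_simps)
    qed
  qed
qed

lemma card_split_at:
  fixes S :: "'a::linorder set"
  assumes "finite S" "b \<in> S"
  shows "card {a\<in>S. a \<le> b} + card {a\<in>S. b \<le> a} = Suc (card S)"
proof -
  have "{a\<in>S. a \<le> b} \<union> {a\<in>S. b \<le> a} = S" "{a\<in>S. a \<le> b} \<inter> {a\<in>S. b \<le> a} = {b}"
    using assms(2) by auto
  then show ?thesis
    using card_Un_Int[of "{a\<in>S. a \<le> b}" "{a\<in>S. b \<le> a}"] assms(1) by simp
qed

lemma distortion_on_ge_pinned_pieces:
  fixes S :: "real set"
  assumes "finite S" "b \<in> S" "c \<in> S" "u \<le> b" "b \<le> c" "c \<le> v"
  defines "T\<^sub>1 \<equiv> {a\<in>S. a \<le> b}" and "T\<^sub>2 \<equiv> {a\<in>S. b \<le> a \<and> a \<le> c}" and "T\<^sub>3 \<equiv> {a\<in>S. c \<le> a}"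
  defines "l\<^sub>1 \<equiv> (b - u)^3 / (3 * half_cells (card T\<^sub>1) False True ^ 2)"
    and "l\<^sub>2 \<equiv> (c - b)^3 / (3 * half_cells (card T\<^sub>2) True True ^ 2)"
    and "l\<^sub>3 \<equiv> (v - c)^3 / (3 * half_cells (card T\<^sub>3) True False ^ 2)"
  shows "card T\<^sub>1 + card T\<^sub>2 + card T\<^sub>3 = card S + 2"
    and "l\<^sub>1 + l\<^sub>2 + l\<^sub>3 \<le> distortion_on S u v"
    and "distortion_on S u v \<le> l\<^sub>1 + l\<^sub>2 + l\<^sub>3 \<Longrightarrow> u < b \<Longrightarrow> b < c \<Longrightarrow> c < v \<Longrightarrow>
      T\<^sub>1 = half_cell_grid (card T\<^sub>1) False u ((b - u) / half_cells (card T\<^sub>1) False True) \<and>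
      T\<^sub>2 = half_cell_grid (card T\<^sub>2) True b ((c - b) / half_cells (card T\<^sub>2) True True) \<and>
      T\<^sub>3 = half_cell_grid (card T\<^sub>3) True c ((v - c) / half_cells (card T\<^sub>3) True False)"
proof -
  define R where "R = {a\<in>S. b \<le> a}"
  have "finite R" "c \<in> R" "T\<^sub>2 = {a\<in>R. a \<le> c}" "T\<^sub>3 = {a\<in>R. c \<le> a}"
    using assms(1-5) by (auto simp: R_def T\<^sub>2_def T\<^sub>3_def)
  show "card T\<^sub>1 + card T\<^sub>2 + card T\<^sub>3 = card S + 2"
    using card_split_at[OF assms(1,2)] card_split_at[OF \<open>finite R\<close> \<open>c \<in> R\<close>]
    unfolding T\<^sub>1_def \<open>T\<^sub>2 = {a\<in>R. a \<le> c}\<close> \<open>T\<^sub>3 = {a\<in>R. c \<le> a}\<close> R_def by simp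
  have cost: "distortion_on S u v = distortion_on T\<^sub>1 u b + distortion_on T\<^sub>2 b c + distortion_on T\<^sub>3 c v"
    using distortion_on_split_at[OF assms(1,2)] distortion_on_split_at[OF \<open>finite R\<close> \<open>c \<in> R\<close>] assms(4-6)
    unfolding T\<^sub>1_def \<open>T\<^sub>2 = {a\<in>R. a \<le> c}\<close> \<open>T\<^sub>3 = {a\<in>R. c \<le> a}\<close> R_def by simp
  have b\<^sub>1: "l\<^sub>1 \<le> distortion_on T\<^sub>1 u b \<and> (distortion_on T\<^sub>1 u b \<le> l\<^sub>1 \<longrightarrow> u < b \<longrightarrow>
      T\<^sub>1 = half_cell_grid (card T\<^sub>1) False u ((b - u) / half_cells (card T\<^sub>1) False True))"
    unfolding l\<^sub>1_def by (rule distortion_on_ge_half_cells) (use assms in \<open>auto simp: T\<^sub>1_def\<close>)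
  have b\<^sub>2: "l\<^sub>2 \<le> distortion_on T\<^sub>2 b c \<and> (distortion_on T\<^sub>2 b c \<le> l\<^sub>2 \<longrightarrow> b < c \<longrightarrow>
      T\<^sub>2 = half_cell_grid (card T\<^sub>2) True b ((c - b) / half_cells (card T\<^sub>2) True True))"
    unfolding l\<^sub>2_def by (rule distortion_on_ge_half_cells) (use assms in \<open>auto simp: T\<^sub>2_def\<close>)
  have b\<^sub>3: "l\<^sub>3 \<le> distortion_on T\<^sub>3 c v \<and> (distortion_on T\<^sub>3 c v \<le> l\<^sub>3 \<longrightarrow> c < v \<longrightarrow>
      T\<^sub>3 = half_cell_grid (card T\<^sub>3) True c ((v - c) / half_cells (card T\<^sub>3) True False))"
    unfolding l\<^sub>3_def by (rule distortion_on_ge_half_cells) (use assms in \<open>auto simp: T\<^sub>3_def\<close>)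
  show "l\<^sub>1 + l\<^sub>2 + l\<^sub>3 \<le> distortion_on S u v"
    using b\<^sub>1 b\<^sub>2 b\<^sub>3 unfolding cost by linarith
  assume "distortion_on S u v \<le> l\<^sub>1 + l\<^sub>2 + l\<^sub>3" "u < b" "b < c" "c < v"
  moreover have "distortion_on T\<^sub>1 u b \<le> l\<^sub>1" "distortion_on T\<^sub>2 b c \<le> l\<^sub>2" "distortion_on T\<^sub>3 c v \<le> l\<^sub>3"
    using calculation(1) b\<^sub>1 b\<^sub>2 b\<^sub>3 unfolding cost by linarith+
  ultimately show "T\<^sub>1 = half_cell_grid (card T\<^sub>1) False u ((b - u) / half_cells (card T\<^sub>1) False True) \<and>
      T\<^sub>2 = half_cell_grid (card T\<^sub>2) True b ((c - b) / half_cells (card T\<^sub>2) True True) \<and>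
      T\<^sub>3 = half_cell_grid (card T\<^sub>3) True c ((v - c) / half_cells (card T\<^sub>3) True False)"
    using b\<^sub>1 b\<^sub>2 b\<^sub>3 by blast
qed

lemma half_cell_bounds_six_points:
  fixes m\<^sub>1 m\<^sub>2 m\<^sub>3 :: nat
  assumes "1 \<le> m\<^sub>1" "2 \<le> m\<^sub>2" "1 \<le> m\<^sub>3" "m\<^sub>1 + m\<^sub>2 + m\<^sub>3 \<le> 8"
  defines "B \<equiv> (1/4)^3 / (3 * half_cells m\<^sub>1 False True ^ 2)
    + (1/4)^3 / (3 * half_cells m\<^sub>2 True True ^ 2) + (1/2)^3 / (3 * half_cells m\<^sub>3 True False ^ 2)"
  shows "1777 / 691200 \<le> B \<and> (B \<le> 1777 / 691200 \<longrightarrow> m\<^sub>1 = 2 \<and> m\<^sub>2 = 3 \<and> m\<^sub>3 = 3)"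
proof -
  have "m\<^sub>1 \<in> {1, 2, 3, 4, 5}" "m\<^sub>2 \<in> {2, 3, 4, 5, 6}" "m\<^sub>3 \<in> {1, 2, 3, 4, 5}"
    using assms(1-4) by auto
  then show ?thesis
    using assms(4) unfolding B_def half_cells_def
    by (elim insertE emptyE; simp add: power_divide)
qed

lemma distortion_on_ge_six_points:
  fixes S :: "real set"
  assumes "finite S" "1/4 \<in> S" "1/2 \<in> S" "card S \<le> 6"
  shows "1777 / 691200 \<le> distortion_on S 0 1 \<and>
    (distortion_on S 0 1 \<le> 1777 / 691200 \<longrightarrow> S = {1/12, 1/4, 3/8, 1/2, 7/10, 9/10})"
proof -
  define T\<^sub>1 T\<^sub>2 T\<^sub>3 where "T\<^sub>1 = {a\<in>S. a \<le> 1/4}" and "T\<^sub>2 = {a\<in>S. 1/4 \<le> a \<and> a \<le> 1/2}"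
    and "T\<^sub>3 = {a\<in>S. 1/2 \<le> a}"
  define B where "B = (1/4)^3 / (3 * half_cells (card T\<^sub>1) False True ^ 2)
    + (1/4)^3 / (3 * half_cells (card T\<^sub>2) True True ^ 2) + (1/2)^3 / (3 * half_cells (card T\<^sub>3) True False ^ 2)"
  note pieces = distortion_on_ge_pinned_pieces[OF assms(1-3), of 0 1,
      folded T\<^sub>1_def T\<^sub>2_def T\<^sub>3_def, simplified, folded B_def]
  have "1/4 \<in> T\<^sub>1" "{1/4, 1/2} \<subseteq> T\<^sub>2" "1/2 \<in> T\<^sub>3" "finite T\<^sub>1" "finite T\<^sub>2" "finite T\<^sub>3"
    using assms(1-3) by (auto simp: T\<^sub>1_def T\<^sub>2_def T\<^sub>3_def)
  then have "1 \<le> card T\<^sub>1" "2 \<le> card T\<^sub>2" "1 \<le> card T\<^sub>3"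
    using card_mono[of T\<^sub>2 "{1/4, 1/2}"] by (auto simp: Suc_le_eq card_gt_0_iff)
  moreover have "card T\<^sub>1 + card T\<^sub>2 + card T\<^sub>3 \<le> 8" using pieces(1) assms(4) by simp
  ultimately have numeric: "1777 / 691200 \<le> B" "B \<le> 1777 / 691200 \<Longrightarrow> card T\<^sub>1 = 2 \<and> card T\<^sub>2 = 3 \<and> card T\<^sub>3 = 3"
    using half_cell_bounds_six_points unfolding B_def by blast+
  show ?thesis
  proof (intro conjI impI)
    show "1777 / 691200 \<le> distortion_on S 0 1" using numeric(1) pieces(2) by linarith
    assume "distortion_on S 0 1 \<le> 1777 / 691200"
    then have "distortion_on S 0 1 \<le> B" "B \<le> 1777 / 691200" using numeric(1) pieces(2) by linarith+
    then have "T\<^sub>1 = half_cell_grid 2 False 0 (1/4 / half_cells 2 False True)"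
      "T\<^sub>2 = half_cell_grid 3 True (1/4) (1/4 / half_cells 3 True True)"
      "T\<^sub>3 = half_cell_grid 3 True (1/2) (1/2 / half_cells 3 True False)"
      using pieces(3) numeric(2) by simp_all
    then have "T\<^sub>1 = {1/12, 1/4}" "T\<^sub>2 = {1/4, 3/8, 1/2}" "T\<^sub>3 = {1/2, 7/10, 9/10}"
      by (auto simp: half_cell_grid_def half_cells_def numeral_3_eq_3 numeral_2_eq_2 lessThan_Suc)
    moreover have "S = T\<^sub>1 \<union> T\<^sub>2 \<union> T\<^sub>3" by (auto simp: T\<^sub>1_def T\<^sub>2_def T\<^sub>3_def)
    ultimately show "S = {1/12, 1/4, 3/8, 1/2, 7/10, 9/10}" by auto
  qed
qed

lemma voronoi_alpha6:
  defines "A \<equiv> {1/12, 1/4, 3/8, 1/2, 7/10, 9/10 :: real}"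
  shows "voronoi A (1/12) = {..1/6}" "voronoi A (1/4) = {1/6..5/16}"
    "voronoi A (3/8) = {5/16..7/16}" "voronoi A (1/2) = {7/16..3/5}"
    "voronoi A (7/10) = {3/5..4/5}" "voronoi A (9/10) = {4/5..}"
  unfolding A_def voronoi_def by auto

lemma distortion_on_alpha6: "distortion_on {1/12, 1/4, 3/8, 1/2, 7/10, 9/10} 0 1 = 1777 / 691200"
proof -
  define A where "A = {1/12, 1/4, 3/8, 1/2, 7/10, 9/10 :: real}"
  have "finite A" "A \<noteq> {}" by (simp_all add: A_def)
  have "distortion_on A 0 1 = distortion_on A 0 (1/6) + distortion_on A (1/6) (5/16)
      + distortion_on A (5/16) (7/16) + distortion_on A (7/16) (3/5) + distortion_on A (3/5) (4/5)
      + distortion_on A (4/5) 1"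
    using distortion_on_combine[OF \<open>finite A\<close> \<open>A \<noteq> {}\<close>, of 0 "1/6" 1]
      distortion_on_combine[OF \<open>finite A\<close> \<open>A \<noteq> {}\<close>, of "1/6" "5/16" 1]
      distortion_on_combine[OF \<open>finite A\<close> \<open>A \<noteq> {}\<close>, of "5/16" "7/16" 1]
      distortion_on_combine[OF \<open>finite A\<close> \<open>A \<noteq> {}\<close>, of "7/16" "3/5" 1]
      distortion_on_combine[OF \<open>finite A\<close> \<open>A \<noteq> {}\<close>, of "3/5" "4/5" 1]
    by simp
  also have "\<dots> = distortion_on {1/12} 0 (1/6) + distortion_on {1/4} (1/6) (5/16)
      + distortion_on {3/8} (5/16) (7/16) + distortion_on {1/2} (7/16) (3/5)
      + distortion_on {7/10} (3/5) (4/5) + distortion_on {9/10} (4/5) 1"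
    by (intro arg_cong2[where f = "(+)"] distortion_on_voronoi_cell[OF \<open>finite A\<close>])
      (auto simp: A_def voronoi_alpha6)
  finally show ?thesis
    unfolding A_def by (simp add: distortion_on_singleton power2_eq_square power3_eq_cube)
qed

lemma measure_uniform_measure_interval:
  fixes a b c d :: real
  assumes "a \<le> c" "c \<le> d" "d \<le> b" "a < b"
  shows "measure (uniform_measure lborel {a..b}) {c..d} = (d - c) / (b - a)"
proof -
  have "{a..b} \<inter> {c..d} = {c..d}" using assms by auto
  then show ?thesis using assms by (subst measure_uniform_measure) auto
qed

lemma measure_voronoi_alpha6_pos:
  "\<forall>b\<in>{1/4, 1/2}.
    0 < measure (uniform_measure lborel {0..1}) (voronoi {1/12, 1/4, 3/8, 1/2, 7/10, 9/10} b)"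
proof -
  have "measure (uniform_measure lborel {0..1}) {1/6..5/16::real} = (5/16 - 1/6) / (1 - 0)"
    "measure (uniform_measure lborel {0..1}) {7/16..3/5::real} = (3/5 - 7/16) / (1 - 0)"
    by (rule measure_uniform_measure_interval; simp)+
  then show ?thesis using voronoi_alpha6(2,4) by simp
qed

lemma cond_V_eqI:
  assumes "finite \<alpha>\<^sub>0" "card \<alpha>\<^sub>0 \<le> n - card \<beta>" "distortion P (\<alpha>\<^sub>0 \<union> \<beta>) = d"
    and "\<And>\<alpha>. finite \<alpha> \<Longrightarrow> card \<alpha> \<le> n - card \<beta> \<Longrightarrow> d \<le> distortion P (\<alpha> \<union> \<beta>)"
  shows "cond_V P \<beta> n = d"
  unfolding cond_V_def by (rule cInf_eq_minimum) (use assms in blast)+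

lemma cond_optimal_unique:
  assumes "cond_optimal P \<beta> n S"
    and "\<And>\<alpha>. finite \<alpha> \<Longrightarrow> card \<alpha> \<le> n - card \<beta> \<Longrightarrow> distortion P (\<alpha> \<union> \<beta>) \<le> cond_V P \<beta> n \<Longrightarrow>
      \<alpha> \<union> \<beta> = S\<^sub>0"
  shows "S = S\<^sub>0"
  using assms unfolding cond_optimal_def by force

theorem proposition3p5:
  fixes P :: "real measure" and \<beta> \<alpha>6 :: "real set"
  assumes "P = uniform_measure lborel {0..1}"
      and "\<beta> = {1/4, 1/2}"
      and "\<alpha>6 = {1/12, 1/4, 3/8, 1/2, 7/10, 9/10}"
  shows "cond_optimal P \<beta> 6 \<alpha>6 \<and> (\<forall>S. cond_optimal P \<beta> 6 S \<longrightarrow> S = \<alpha>6)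
         \<and> cond_V P \<beta> 6 = 1777 / 691200"
proof -
  have bound: "1777 / 691200 \<le> distortion P (\<alpha> \<union> \<beta>) \<and>
      (distortion P (\<alpha> \<union> \<beta>) \<le> 1777 / 691200 \<longrightarrow> \<alpha> \<union> \<beta> = \<alpha>6)"
    if "finite \<alpha>" "card \<alpha> \<le> 6 - card \<beta>" for \<alpha>
  proof -
    have "card (\<alpha> \<union> \<beta>) \<le> 6" using card_Un_le[of \<alpha> \<beta>] that(2) assms(2) by simp
    then show ?thesis
      using distortion_on_ge_six_points[of "\<alpha> \<union> \<beta>"] distortion_uniform_measure[of "\<alpha> \<union> \<beta>" 0 1]
        that(1) assms by simp
  qed
  have \<alpha>6: "\<alpha>6 = {1/12, 3/8, 7/10, 9/10} \<union> \<beta>" "distortion P \<alpha>6 = 1777 / 691200"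
    using distortion_on_alpha6 distortion_uniform_measure[of \<alpha>6 0 1] assms by auto
  have V: "cond_V P \<beta> 6 = 1777 / 691200"
    by (rule cond_V_eqI[of "{1/12, 3/8, 7/10, 9/10}"]) (use bound \<alpha>6 assms(2) in auto)
  have "\<exists>\<alpha>. finite \<alpha> \<and> card \<alpha> \<le> 6 - card \<beta> \<and> \<alpha>6 = \<alpha> \<union> \<beta>"
    using \<alpha>6(1) assms(2) by (intro exI[of _ "{1/12, 3/8, 7/10, 9/10}"]) simp
  then have "cond_optimal P \<beta> 6 \<alpha>6"
    unfolding cond_optimal_def V using \<alpha>6(2) measure_voronoi_alpha6_pos assms by simp
  moreover have "S = \<alpha>6" if "cond_optimal P \<beta> 6 S" for S
  proof (rule cond_optimal_unique[OF that])
    fix \<alpha> assume "finite \<alpha>" "card \<alpha> \<le> 6 - card \<beta>" "distortion P (\<alpha> \<union> \<beta>) \<le> cond_V P \<beta> 6"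
    then show "\<alpha> \<union> \<beta> = \<alpha>6" using bound V by simp
  qed
  ultimately show ?thesis using V by blast
qed

end
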